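(* Let $\phi \colon R \to S$ be a centralizing ring homomorphism and let \[ \mathcal{C}_\phi = \{ q \in \mathcal{C} R \mid \langle \phi D_q\rangle \in \mathscr{E}(S) \} . \] Then $R\mathcal{C}_\phi$ is a subring of $\widetilde R$ containing $R$. The map $\phi$ extends uniquely to a ring homomorphism $\widetilde{\phi} \colon R\mathcal{C}_\phi \to \widetilde S$ which is centralizing. In particular, $\widetilde{\phi}(\mathcal{C}_\phi) \subseteq \mathcal{C} S$.
   Context: $R$ and $S$ are arbitrary rings with $1$. For a ring $R$, $\operatorname{Q} R$ denotes the symmetric ring of quotients of $R$ (it contains $R$ as a subring), and $\mathscr{E}(R)$ denotes the collection of all two-sided ideals of $R$ having zero left and right annihilator in $R$. For $q \in \operatorname{Q} R$, $D_q := \{ r \in R \mid qRr \subseteq R \text{ and } rRq \subseteq R\}$; this is an ideal belonging to $\mathscr{E}(R)$. The extended center is $\mathcal{C} R := \mathcal{Z}(\operatorname{Q} R)$, the center of $\operatorname{Q} R$ (equal to the centralizer of $R$ in $\operatorname{Q} R$), and $\widetilde R := R(\mathcal{C} R) \subseteq \operatorname{Q} R$ is the subring generated by $R$ and $\mathcal{C} R$; similarly $\mathcal{C} S = \mathcal{Z}(\operatorname{Q} S)$ and $\widetilde S = S(\mathcal{C} S)$. A ring homomorphism $\phi \colon R \to S$ is centralizing if $S$ is generated by $\phi(R)$ and the centralizer $C_S(\phi R) = \{ s \in S \mid s\phi(r) = \phi(r)s \ \forall r \in R\}$; for an ideal $I$ of $R$, $\langle \phi I\rangle$ denotes the ideal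 of $S$ generated by $\phi(I)$, which equals $\phi(I)\,C_S(\phi R) = C_S(\phi R)\,\phi(I)$. *)

theory Defs
  imports "HOL-Algebra.Algebra"
begin

definition sandwich :: "('a, 'b) ring_scheme \<Rightarrow> 'a \<Rightarrow> 'a set \<Rightarrow> 'a \<Rightarrow> 'a set" where
  "sandwich Q u Y v = {y. \<exists>x \<in> Y. y = (u \<otimes>\<^bsub>Q\<^esub> x) \<otimes>\<^bsub>Q\<^esub> v}"

definition dense_ideals :: "('a, 'b) ring_scheme \<Rightarrow> 'a set set" where
  "dense_ideals R = {I. ideal I R \<and>
      (\<forall>r \<in> carrier R. (\<forall>x \<in> I. r \<otimes>\<^bsub>R\<^esub> x = \<zero>\<^bsub>R\<^esub>) \<longrightarrow> r = \<zero>\<^bsub>R\<^esub>) \<and>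
      (\<forall>r \<in> carrier R. (\<forall>x \<in> I. x \<otimes>\<^bsub>R\<^esub> r = \<zero>\<^bsub>R\<^esub>) \<longrightarrow> r = \<zero>\<^bsub>R\<^esub>)}"

text \<open>Q R is characterised up to unique isomorphism over R by the
  following properties (Lanning): (i) every q has some I in E(R) with qI, Iq in R;
  (ii) qI = 0 or Iq = 0 with I in E(R) forces q = 0; (iii) every compatible pair
  (f, g) of a right-linear f and left-linear g from I in E(R) to R is realised by
  some q via qx = f x and xq = g x.\<close>

definition sym_quot :: "'a ring \<Rightarrow> 'a ring \<Rightarrow> bool" where
  "sym_quot R Q \<longleftrightarrow> ring Q \<and> subring (carrier R) Q \<and> R = Q\<lparr>carrier := carrier R\<rparr> \<and>
     (\<forall>q \<in> carrier Q. \<exists>I \<in> dense_ideals R.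
        (\<forall>x \<in> I. q \<otimes>\<^bsub>Q\<^esub> x \<in> carrier R \<and> x \<otimes>\<^bsub>Q\<^esub> q \<in> carrier R)) \<and>
     (\<forall>q \<in> carrier Q. \<forall>I \<in> dense_ideals R.
        ((\<forall>x \<in> I. q \<otimes>\<^bsub>Q\<^esub> x = \<zero>\<^bsub>Q\<^esub>) \<or> (\<forall>x \<in> I. x \<otimes>\<^bsub>Q\<^esub> q = \<zero>\<^bsub>Q\<^esub>)) \<longrightarrow> q = \<zero>\<^bsub>Q\<^esub>) \<and>
     (\<forall>I \<in> dense_ideals R. \<forall>f g.
        f \<in> I \<rightarrow> carrier R \<and> g \<in> I \<rightarrow> carrier R \<and>
        (\<forall>x \<in> I. \<forall>y \<in> I. f (x \<oplus>\<^bsub>R\<^esub> y) = f x \<oplus>\<^bsub>R\<^esub> f y \<and> g (x \<oplus>\<^bsub>R\<^esub> y) = g x \<oplus>\<^bsub>R\<^esub> g y) \<and>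
        (\<forall>x \<in> I. \<forall>r \<in> carrier R. f (x \<otimes>\<^bsub>R\<^esub> r) = f x \<otimes>\<^bsub>R\<^esub> r \<and> g (r \<otimes>\<^bsub>R\<^esub> x) = r \<otimes>\<^bsub>R\<^esub> g x) \<and>
        (\<forall>x \<in> I. \<forall>y \<in> I. x \<otimes>\<^bsub>R\<^esub> f y = g x \<otimes>\<^bsub>R\<^esub> y)
        \<longrightarrow> (\<exists>q \<in> carrier Q. \<forall>x \<in> I. q \<otimes>\<^bsub>Q\<^esub> x = f x \<and> x \<otimes>\<^bsub>Q\<^esub> q = g x))"

definition Dq :: "'a ring \<Rightarrow> 'a ring \<Rightarrow> 'a \<Rightarrow> 'a set" where
  "Dq R Q q = {r \<in> carrier R. sandwich Q q (carrier R) r \<subseteq> carrier R \<and>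
                              sandwich Q r (carrier R) q \<subseteq> carrier R}"

definition ring_centralizer :: "('a, 'b) ring_scheme \<Rightarrow> 'a set \<Rightarrow> 'a set" where
  "ring_centralizer B Y = {s \<in> carrier B. \<forall>x \<in> Y. s \<otimes>\<^bsub>B\<^esub> x = x \<otimes>\<^bsub>B\<^esub> s}"

definition ext_center :: "'a ring \<Rightarrow> 'a set" where
  "ext_center Q = ring_centralizer Q (carrier Q)"

definition centralizing :: "('a, 'c) ring_scheme \<Rightarrow> ('b, 'd) ring_scheme \<Rightarrow> ('a \<Rightarrow> 'b) \<Rightarrow> bool" where
  "centralizing A B h \<longleftrightarrow>
     carrier B = generate_ring B (h ` carrier A \<union> ring_centralizer B (h ` carrier A))"

definition C_phi :: "'a ring \<Rightarrow> 'a ring \<Rightarrow> 'b ring \<Rightarrow> ('a \<Rightarrow> 'b) \<Rightarrow> 'a set" where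
  "C_phi R QR S \<phi> = {q \<in> ext_center QR. genideal S (\<phi> ` Dq R QR q) \<in> dense_ideals S}"

end

theory Submission
  imports Defs
begin

text \<open>
  For \<open>x\<close> in the ring generated by \<open>R\<close> and \<open>C_phi\<close> the value \<open>y\<close> of the extension is
  forced: \<open>y \<phi>(r) \<phi>(i) = \<phi>(x r i)\<close> whenever \<open>x r i \<in> R\<close>.  If this holds for all \<open>i\<close>
  in a set \<open>I\<close> whose image no nonzero element of \<open>Q S\<close> annihilates from the left, \<open>y\<close> is
  determined, and such representatives add and multiply along with \<open>x\<close> (using products
  of the sets \<open>I\<close>).  So it suffices to represent the generators.  \<open>\<phi>(r)\<close> represents
  \<open>r\<close>.  For \<open>q \<in> C_phi\<close>, the assignment \<open>\<phi>(d) s \<mapsto> \<phi>(d q) s\<close> extends to a well-defined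
  \<open>S\<close>-bimodule map on the dense ideal \<open>\<langle>\<phi> D\<^sub>q\<rangle>\<close> (this is where \<open>S\<close> being generated
  by \<open>\<phi>(R)\<close> and its centraliser is used), which by the defining property of \<open>Q S\<close> is
  multiplication by a central element of \<open>Q S\<close>.  All representatives obtained this way
  commute with \<open>C\<^sub>S(\<phi> R)\<close>, which gives the centralizing property, and any homomorphism
  extending \<open>\<phi>\<close> yields representatives too, which gives uniqueness.
\<close>

section \<open>Rings and their symmetric rings of quotients\<close>

lemma subring_a_inv_eq:
  assumes "ring Q" "subring T Q" "h \<in> T"
  shows "\<ominus>\<^bsub>Q\<lparr>carrier := T\<rparr>\<^esub> h = \<ominus>\<^bsub>Q\<^esub> h"
proof -
  interpret Q: ring Q by fact
  interpret T: ring "Q\<lparr>carrier := T\<rparr>" using Q.subring_is_ring[OF assms(2)] .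
  have "T \<subseteq> carrier Q" using subringE(1)[OF assms(2)] .
  moreover have "\<ominus>\<^bsub>Q\<lparr>carrier := T\<rparr>\<^esub> h \<in> T" "\<ominus>\<^bsub>Q\<lparr>carrier := T\<rparr>\<^esub> h \<oplus>\<^bsub>Q\<^esub> h = \<zero>\<^bsub>Q\<^esub>"
    using T.a_inv_closed T.l_neg assms(3) by auto
  ultimately have "\<ominus>\<^bsub>Q\<^esub> h = \<ominus>\<^bsub>Q\<lparr>carrier := T\<rparr>\<^esub> h"
    using Q.minus_equality assms(3) by blast
  then show ?thesis by simp
qed

lemma subring_idealI:
  assumes "ring Q" "subring T Q" "K \<subseteq> T" "\<zero>\<^bsub>Q\<^esub> \<in> K"
    and "\<And>a b. a \<in> K \<Longrightarrow> b \<in> K \<Longrightarrow> a \<oplus>\<^bsub>Q\<^esub> b \<in> K"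
    and "\<And>a. a \<in> K \<Longrightarrow> \<ominus>\<^bsub>Q\<^esub> a \<in> K"
    and "\<And>a x. a \<in> K \<Longrightarrow> x \<in> T \<Longrightarrow> x \<otimes>\<^bsub>Q\<^esub> a \<in> K"
    and "\<And>a x. a \<in> K \<Longrightarrow> x \<in> T \<Longrightarrow> a \<otimes>\<^bsub>Q\<^esub> x \<in> K"
  shows "ideal K (Q\<lparr>carrier := T\<rparr>)"
proof -
  interpret T: ring "Q\<lparr>carrier := T\<rparr>" using ring.subring_is_ring assms(1,2) .
  show ?thesis
  proof (rule idealI)
    show "subgroup K (add_monoid (Q\<lparr>carrier := T\<rparr>))"
      using assms subring_a_inv_eq[OF assms(1,2)] by (intro T.add.subgroupI) auto
  qed (use assms T.ring_axioms in auto)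
qed

lemma ideal_mult_equalizer:
  assumes "ring Q" "subring T Q" "z \<in> carrier Q" "z' \<in> carrier Q"
  shows "ideal {x \<in> T. \<forall>a \<in> T. z \<otimes>\<^bsub>Q\<^esub> (a \<otimes>\<^bsub>Q\<^esub> x) = z' \<otimes>\<^bsub>Q\<^esub> (a \<otimes>\<^bsub>Q\<^esub> x)}
           (Q\<lparr>carrier := T\<rparr>)"
proof -
  interpret Q: ring Q by fact
  define K where "K = {x \<in> T. \<forall>a \<in> T. z \<otimes>\<^bsub>Q\<^esub> (a \<otimes>\<^bsub>Q\<^esub> x) = z' \<otimes>\<^bsub>Q\<^esub> (a \<otimes>\<^bsub>Q\<^esub> x)}"
  note T = subringE[OF assms(2)]
  have TQ: "x \<in> T \<Longrightarrow> x \<in> carrier Q" for x using T(1) by blast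
  have "ideal K (Q\<lparr>carrier := T\<rparr>)"
  proof (rule subring_idealI[OF assms(1,2)])
    fix a b x assume a: "a \<in> K"
    show "a \<oplus>\<^bsub>Q\<^esub> b \<in> K" if "b \<in> K"
      using a that assms(3,4) T(7) by (auto simp: K_def Q.r_distr TQ)
    show "\<ominus>\<^bsub>Q\<^esub> a \<in> K"
      using a assms(3,4) T(5) by (auto simp: K_def Q.r_minus TQ)
    show "x \<otimes>\<^bsub>Q\<^esub> a \<in> K" if "x \<in> T"
      using a that T(6) by (auto simp: K_def Q.m_assoc[symmetric] TQ)
    show "a \<otimes>\<^bsub>Q\<^esub> x \<in> K" if "x \<in> T"
      using a that assms(3,4) T(6) by (auto simp: K_def Q.m_assoc[symmetric] TQ)
  qed (use T assms(3,4) TQ in \<open>auto simp: K_def\<close>)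
  then show ?thesis by (simp add: K_def)
qed

lemma (in ring) subring_ring_centralizer:
  assumes "Y \<subseteq> carrier R"
  shows "subring (ring_centralizer R Y) R"
proof (rule subringI)
  fix h1 h2
  assume h: "h1 \<in> ring_centralizer R Y" "h2 \<in> ring_centralizer R Y"
  have "(h1 \<otimes> h2) \<otimes> x = x \<otimes> (h1 \<otimes> h2)" if x: "x \<in> Y" for x
  proof -
    have xc: "x \<in> carrier R" using x assms by blast
    have "(h1 \<otimes> h2) \<otimes> x = h1 \<otimes> (x \<otimes> h2)"
      using h x xc by (simp add: ring_centralizer_def m_assoc)
    also have "\<dots> = x \<otimes> (h1 \<otimes> h2)"
      using h x xc by (simp add: ring_centralizer_def m_assoc[symmetric])
    finally show ?thesis .
  qed
  then show "h1 \<otimes> h2 \<in> ring_centralizer R Y"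
    using h by (simp add: ring_centralizer_def)
qed (use assms in \<open>auto simp: ring_centralizer_def l_minus r_minus l_distr r_distr subset_iff\<close>)

lemma (in ring) subring_right_stabilizer:
  assumes "\<And>x y. P x y \<Longrightarrow> x \<in> carrier R \<and> y \<in> carrier R"
    and "\<And>x y x' y'. P x y \<Longrightarrow> P x' y' \<Longrightarrow> P (x \<oplus> x') (y \<oplus> y')"
    and "\<And>x y. P x y \<Longrightarrow> P (\<ominus> x) (\<ominus> y)"
  shows "subring {t \<in> carrier R. \<forall>x y. P x y \<longrightarrow> P (x \<otimes> t) (y \<otimes> t)} R" (is "subring ?T R")
proof (rule subringI)
  show "\<one> \<in> ?T" using assms(1) by auto
  fix t t' assume t: "t \<in> ?T"
  then show "\<ominus> t \<in> ?T" using assms(1,3) by (auto simp: r_minus)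
  assume t': "t' \<in> ?T"
  show "t \<otimes> t' \<in> ?T" using t t' assms(1) by (auto simp: m_assoc[symmetric])
  show "t \<oplus> t' \<in> ?T" using t t' assms(1,2) by (auto simp: r_distr)
qed auto

lemma (in ring) subring_eq_generate_ring:
  assumes "subring T R" "H \<subseteq> T" "T \<subseteq> generate_ring R H"
  shows "T = generate_ring (R\<lparr>carrier := T\<rparr>) H"
proof -
  have "H \<subseteq> carrier R" using assms(2) subringE(1)[OF assms(1)] by blast
  then have "generate_ring R H \<subseteq> T" using generate_ring_min_subring1 assms(1,2) by blast
  then show ?thesis using assms(3) subring_gen_equality[OF assms(1,2)] by blast
qed

lemma sym_quot_ring: "sym_quot R Q \<Longrightarrow> ring Q"
  and sym_quot_subring: "sym_quot R Q \<Longrightarrow> subring (carrier R) Q"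
  and sym_quot_restrict: "sym_quot R Q \<Longrightarrow> R = Q\<lparr>carrier := carrier R\<rparr>"
  unfolding sym_quot_def by (elim conjE, assumption)+

lemma sym_quot_denominator:
  "sym_quot R Q \<Longrightarrow> p \<in> carrier Q \<Longrightarrow>
     \<exists>I\<in>dense_ideals R. \<forall>x\<in>I. p \<otimes>\<^bsub>Q\<^esub> x \<in> carrier R \<and> x \<otimes>\<^bsub>Q\<^esub> p \<in> carrier R"
  unfolding sym_quot_def by (elim conjE) (erule bspec)

lemma sym_quot_annihilator:
  assumes "sym_quot R Q" "p \<in> carrier Q" "I \<in> dense_ideals R"
    and "\<And>x. x \<in> I \<Longrightarrow> p \<otimes>\<^bsub>Q\<^esub> x = \<zero>\<^bsub>Q\<^esub>"
  shows "p = \<zero>\<^bsub>Q\<^esub>"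
proof -
  from assms(1) have "\<forall>p \<in> carrier Q. \<forall>I \<in> dense_ideals R.
      ((\<forall>x \<in> I. p \<otimes>\<^bsub>Q\<^esub> x = \<zero>\<^bsub>Q\<^esub>) \<or> (\<forall>x \<in> I. x \<otimes>\<^bsub>Q\<^esub> p = \<zero>\<^bsub>Q\<^esub>)) \<longrightarrow> p = \<zero>\<^bsub>Q\<^esub>"
    unfolding sym_quot_def by (elim conjE) assumption
  then show ?thesis using assms(2-4) by blast
qed

lemma sym_quot_extension:
  assumes "sym_quot R Q" "I \<in> dense_ideals R" "f \<in> I \<rightarrow> carrier R"
    and "\<forall>x \<in> I. \<forall>y \<in> I. f (x \<oplus>\<^bsub>R\<^esub> y) = f x \<oplus>\<^bsub>R\<^esub> f y"
    and "\<forall>x \<in> I. \<forall>r \<in> carrier R. f (x \<otimes>\<^bsub>R\<^esub> r) = f x \<otimes>\<^bsub>R\<^esub> r \<and> f (r \<otimes>\<^bsub>R\<^esub> x) = r \<otimes>\<^bsub>R\<^esub> f x"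
    and "\<forall>x \<in> I. \<forall>y \<in> I. x \<otimes>\<^bsub>R\<^esub> f y = f x \<otimes>\<^bsub>R\<^esub> y"
  shows "\<exists>q \<in> carrier Q. \<forall>x \<in> I. q \<otimes>\<^bsub>Q\<^esub> x = f x \<and> x \<otimes>\<^bsub>Q\<^esub> q = f x"
proof -
  from assms(1) have "\<forall>I \<in> dense_ideals R. \<forall>f g.
        f \<in> I \<rightarrow> carrier R \<and> g \<in> I \<rightarrow> carrier R \<and>
        (\<forall>x \<in> I. \<forall>y \<in> I. f (x \<oplus>\<^bsub>R\<^esub> y) = f x \<oplus>\<^bsub>R\<^esub> f y \<and> g (x \<oplus>\<^bsub>R\<^esub> y) = g x \<oplus>\<^bsub>R\<^esub> g y) \<and>
        (\<forall>x \<in> I. \<forall>r \<in> carrier R. f (x \<otimes>\<^bsub>R\<^esub> r) = f x \<otimes>\<^bsub>R\<^esub> r \<and> g (r \<otimes>\<^bsub>R\<^esub> x) = r \<otimes>\<^bsub>R\<^esub> g x) \<and>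
        (\<forall>x \<in> I. \<forall>y \<in> I. x \<otimes>\<^bsub>R\<^esub> f y = g x \<otimes>\<^bsub>R\<^esub> y)
        \<longrightarrow> (\<exists>q \<in> carrier Q. \<forall>x \<in> I. q \<otimes>\<^bsub>Q\<^esub> x = f x \<and> x \<otimes>\<^bsub>Q\<^esub> q = g x)"
    unfolding sym_quot_def by (elim conjE) assumption
  from this[rule_format, of I f f] assms(2-) show ?thesis by simp
qed

lemma dense_ideal_subset: "I \<in> dense_ideals R \<Longrightarrow> I \<subseteq> carrier R"
  unfolding dense_ideals_def by (auto intro: ideal.Icarr)

lemma sym_quot_cancel:
  assumes Q: "sym_quot R Q" and I: "I \<in> dense_ideals R"
    and p: "p \<in> carrier Q" "p' \<in> carrier Q"
    and eq: "\<And>x. x \<in> I \<Longrightarrow> p \<otimes>\<^bsub>Q\<^esub> x = p' \<otimes>\<^bsub>Q\<^esub> x"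
  shows "p = p'"
proof -
  interpret Q: ring Q using sym_quot_ring[OF Q] .
  have I_Q: "x \<in> I \<Longrightarrow> x \<in> carrier Q" for x
    using dense_ideal_subset[OF I] subringE(1)[OF sym_quot_subring[OF Q]] by blast
  have "(p \<ominus>\<^bsub>Q\<^esub> p') \<otimes>\<^bsub>Q\<^esub> x = \<zero>\<^bsub>Q\<^esub>" if x: "x \<in> I" for x
  proof -
    have "(p \<ominus>\<^bsub>Q\<^esub> p') \<otimes>\<^bsub>Q\<^esub> x = p \<otimes>\<^bsub>Q\<^esub> x \<ominus>\<^bsub>Q\<^esub> p' \<otimes>\<^bsub>Q\<^esub> x"
      using p I_Q[OF x] by (simp add: Q.minus_eq Q.l_distr Q.l_minus)
    then show ?thesis using eq[OF x] p I_Q[OF x] by simp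
  qed
  then have "p \<ominus>\<^bsub>Q\<^esub> p' = \<zero>\<^bsub>Q\<^esub>"
    using sym_quot_annihilator[OF Q _ I] p by simp
  then show ?thesis using p by (simp add: Q.r_right_minus_eq)
qed

text \<open>The element provided by the extension property commutes with \<open>R\<close> because \<open>f\<close> is
  \<open>R\<close>-linear on both sides, and then with all of \<open>Q\<close> by cancelling against a dense ideal
  \<open>I'\<close> with \<open>p I' \<subseteq> R\<close>.\<close>

lemma sym_quot_bimodule_map_ext_center:
  assumes Q: "sym_quot R Q" and I: "I \<in> dense_ideals R" and f: "f \<in> I \<rightarrow> carrier R"
    and f_add: "\<And>x y. x \<in> I \<Longrightarrow> y \<in> I \<Longrightarrow> f (x \<oplus>\<^bsub>Q\<^esub> y) = f x \<oplus>\<^bsub>Q\<^esub> f y"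
    and f_left: "\<And>x r. x \<in> I \<Longrightarrow> r \<in> carrier R \<Longrightarrow> f (r \<otimes>\<^bsub>Q\<^esub> x) = r \<otimes>\<^bsub>Q\<^esub> f x"
    and f_right: "\<And>x r. x \<in> I \<Longrightarrow> r \<in> carrier R \<Longrightarrow> f (x \<otimes>\<^bsub>Q\<^esub> r) = f x \<otimes>\<^bsub>Q\<^esub> r"
  shows "\<exists>y\<in>ext_center Q. \<forall>x\<in>I. y \<otimes>\<^bsub>Q\<^esub> x = f x"
proof -
  interpret Q: ring Q using sym_quot_ring[OF Q] .
  have R_ops: "(\<otimes>\<^bsub>R\<^esub>) = (\<otimes>\<^bsub>Q\<^esub>)" "(\<oplus>\<^bsub>R\<^esub>) = (\<oplus>\<^bsub>Q\<^esub>)"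
    by (subst sym_quot_restrict[OF Q], simp)+
  have R_Q: "r \<in> carrier R \<Longrightarrow> r \<in> carrier Q" for r
    using subringE(1)[OF sym_quot_subring[OF Q]] by blast
  have I_R: "x \<in> I \<Longrightarrow> x \<in> carrier R" for x using dense_ideal_subset[OF I] by blast
  have I_ideal: "ideal I R" using I unfolding dense_ideals_def by blast
  have "\<exists>y\<in>carrier Q. \<forall>x\<in>I. y \<otimes>\<^bsub>Q\<^esub> x = f x \<and> x \<otimes>\<^bsub>Q\<^esub> y = f x"
  proof -
    have "x \<otimes>\<^bsub>Q\<^esub> f y = f x \<otimes>\<^bsub>Q\<^esub> y" if "x \<in> I" "y \<in> I" for x y
      using f_left[of y x] f_right[of x y] that I_R by simp
    then show ?thesis
      using sym_quot_extension[OF Q I f] f_add f_left f_right I_R unfolding R_ops by simp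
  qed
  then obtain y where y: "y \<in> carrier Q" and yI: "\<And>x. x \<in> I \<Longrightarrow> y \<otimes>\<^bsub>Q\<^esub> x = f x \<and> x \<otimes>\<^bsub>Q\<^esub> y = f x"
    by blast
  have y_R: "y \<otimes>\<^bsub>Q\<^esub> r = r \<otimes>\<^bsub>Q\<^esub> y" if r: "r \<in> carrier R" for r
  proof (rule sym_quot_cancel[OF Q I])
    fix x assume x: "x \<in> I"
    have rx: "r \<otimes>\<^bsub>Q\<^esub> x \<in> I" using ideal.I_l_closed[OF I_ideal x r] R_ops by simp
    have "y \<otimes>\<^bsub>Q\<^esub> r \<otimes>\<^bsub>Q\<^esub> x = f (r \<otimes>\<^bsub>Q\<^esub> x)"
      using yI[OF rx] y r x by (simp add: Q.m_assoc R_Q I_R)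
    also have "\<dots> = r \<otimes>\<^bsub>Q\<^esub> y \<otimes>\<^bsub>Q\<^esub> x"
      using f_left[OF x r] yI[OF x] y r x by (simp add: Q.m_assoc R_Q I_R)
    finally show "y \<otimes>\<^bsub>Q\<^esub> r \<otimes>\<^bsub>Q\<^esub> x = r \<otimes>\<^bsub>Q\<^esub> y \<otimes>\<^bsub>Q\<^esub> x" .
  qed (use y r R_Q in auto)
  have "y \<otimes>\<^bsub>Q\<^esub> p = p \<otimes>\<^bsub>Q\<^esub> y" if p: "p \<in> carrier Q" for p
  proof -
    obtain I' where I': "I' \<in> dense_ideals R" and pI': "\<And>x. x \<in> I' \<Longrightarrow> p \<otimes>\<^bsub>Q\<^esub> x \<in> carrier R"
      using sym_quot_denominator[OF Q p] by blast
    show ?thesis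
    proof (rule sym_quot_cancel[OF Q I'])
      fix x assume x: "x \<in> I'"
      have xR: "x \<in> carrier R" using dense_ideal_subset[OF I'] x by blast
      have "y \<otimes>\<^bsub>Q\<^esub> p \<otimes>\<^bsub>Q\<^esub> x = p \<otimes>\<^bsub>Q\<^esub> x \<otimes>\<^bsub>Q\<^esub> y"
        using y_R[OF pI'[OF x]] y p xR by (simp add: Q.m_assoc R_Q)
      also have "\<dots> = p \<otimes>\<^bsub>Q\<^esub> y \<otimes>\<^bsub>Q\<^esub> x"
        using y_R[OF xR] y p xR by (simp add: Q.m_assoc R_Q)
      finally show "y \<otimes>\<^bsub>Q\<^esub> p \<otimes>\<^bsub>Q\<^esub> x = p \<otimes>\<^bsub>Q\<^esub> y \<otimes>\<^bsub>Q\<^esub> x" .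
    qed (use y p in auto)
  qed
  then have "y \<in> ext_center Q" using y unfolding ext_center_def ring_centralizer_def by blast
  then show ?thesis using yI by blast
qed

lemma ext_center_closed: "z \<in> ext_center Q \<Longrightarrow> z \<in> carrier Q"
  and ext_center_commute: "z \<in> ext_center Q \<Longrightarrow> p \<in> carrier Q \<Longrightarrow> z \<otimes>\<^bsub>Q\<^esub> p = p \<otimes>\<^bsub>Q\<^esub> z"
  unfolding ext_center_def ring_centralizer_def by auto

lemma ext_center_one:
  assumes "ring Q" shows "\<one>\<^bsub>Q\<^esub> \<in> ext_center Q"
proof -
  interpret ring Q by fact
  show ?thesis unfolding ext_center_def ring_centralizer_def by simp
qed

locale centralizing_sym_quot =
  fixes R QR :: "'a ring" and S QS :: "'b ring" and \<phi> :: "'a \<Rightarrow> 'b"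
  assumes R_QR: "sym_quot R QR" and S_QS: "sym_quot S QS"
    and hom: "\<phi> \<in> ring_hom R S" and centralizing: "centralizing R S \<phi>"

sublocale centralizing_sym_quot \<subseteq> QR: ring QR using sym_quot_ring[OF R_QR] .
sublocale centralizing_sym_quot \<subseteq> QS: ring QS using sym_quot_ring[OF S_QS] .

context centralizing_sym_quot
begin

lemmas R_restrict = sym_quot_restrict[OF R_QR]
lemmas S_restrict = sym_quot_restrict[OF S_QS]
lemmas R_subring = sym_quot_subring[OF R_QR]
lemmas S_subring = sym_quot_subring[OF S_QS]
lemmas R_closed = subringE(3,5,6,7)[OF R_subring]
lemmas S_closed = subringE(3,5,6,7)[OF S_subring]

lemma R_ops [simp]: "(\<otimes>\<^bsub>R\<^esub>) = (\<otimes>\<^bsub>QR\<^esub>)" "(\<oplus>\<^bsub>R\<^esub>) = (\<oplus>\<^bsub>QR\<^esub>)" "\<one>\<^bsub>R\<^esub> = \<one>\<^bsub>QR\<^esub>" "\<zero>\<^bsub>R\<^esub> = \<zero>\<^bsub>QR\<^esub>"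
  by (subst R_restrict, simp)+

lemma S_ops [simp]: "(\<otimes>\<^bsub>S\<^esub>) = (\<otimes>\<^bsub>QS\<^esub>)" "(\<oplus>\<^bsub>S\<^esub>) = (\<oplus>\<^bsub>QS\<^esub>)" "\<one>\<^bsub>S\<^esub> = \<one>\<^bsub>QS\<^esub>" "\<zero>\<^bsub>S\<^esub> = \<zero>\<^bsub>QS\<^esub>"
  by (subst S_restrict, simp)+

lemma R_in_QR: "r \<in> carrier R \<Longrightarrow> r \<in> carrier QR"
  using subringE(1)[OF R_subring] by blast

lemma S_in_QS: "s \<in> carrier S \<Longrightarrow> s \<in> carrier QS"
  using subringE(1)[OF S_subring] by blast

lemma phi_closed: "r \<in> carrier R \<Longrightarrow> \<phi> r \<in> carrier S"
  using ring_hom_closed[OF hom] .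

lemma phi_mult: "r \<in> carrier R \<Longrightarrow> r' \<in> carrier R \<Longrightarrow> \<phi> (r \<otimes>\<^bsub>QR\<^esub> r') = \<phi> r \<otimes>\<^bsub>QS\<^esub> \<phi> r'"
  using ring_hom_mult[OF hom] by fastforce

lemma phi_add: "r \<in> carrier R \<Longrightarrow> r' \<in> carrier R \<Longrightarrow> \<phi> (r \<oplus>\<^bsub>QR\<^esub> r') = \<phi> r \<oplus>\<^bsub>QS\<^esub> \<phi> r'"
  using ring_hom_add[OF hom] by fastforce

lemma phi_one: "\<phi> \<one>\<^bsub>QR\<^esub> = \<one>\<^bsub>QS\<^esub>"
  using ring_hom_one[OF hom] by simp

lemma ring_R: "ring R" and ring_S: "ring S"
  using QR.subring_is_ring[OF R_subring] QS.subring_is_ring[OF S_subring]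
  by (simp_all flip: R_restrict S_restrict)

lemma phi_a_inv: "r \<in> carrier R \<Longrightarrow> \<phi> (\<ominus>\<^bsub>QR\<^esub> r) = \<ominus>\<^bsub>QS\<^esub> \<phi> r"
proof -
  assume r: "r \<in> carrier R"
  interpret ring_hom_ring R S \<phi> using ring_R ring_S hom by (rule ring_hom_ringI2)
  have "\<phi> (\<ominus>\<^bsub>R\<^esub> r) = \<ominus>\<^bsub>S\<^esub> \<phi> r" using r by simp
  moreover have "\<ominus>\<^bsub>R\<^esub> r = \<ominus>\<^bsub>QR\<^esub> r"
    using subring_a_inv_eq[OF QR.ring_axioms R_subring r] by (simp flip: R_restrict)
  moreover have "\<ominus>\<^bsub>S\<^esub> \<phi> r = \<ominus>\<^bsub>QS\<^esub> \<phi> r"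
    using subring_a_inv_eq[OF QS.ring_axioms S_subring phi_closed[OF r]] by (simp flip: S_restrict)
  ultimately show ?thesis by simp
qed

abbreviation phi_centralizer :: "'b set" where
  "phi_centralizer \<equiv> ring_centralizer S (\<phi> ` carrier R)"

lemma phi_centralizer_closed: "c \<in> phi_centralizer \<Longrightarrow> c \<in> carrier QS"
  unfolding ring_centralizer_def using S_in_QS by blast

lemma phi_centralizer_commute:
  "c \<in> phi_centralizer \<Longrightarrow> r \<in> carrier R \<Longrightarrow> c \<otimes>\<^bsub>QS\<^esub> \<phi> r = \<phi> r \<otimes>\<^bsub>QS\<^esub> c"
  unfolding ring_centralizer_def by simp

lemma S_generated: "carrier S = generate_ring QS (\<phi> ` carrier R \<union> phi_centralizer)"
proof -
  have "\<phi> ` carrier R \<union> phi_centralizer \<subseteq> carrier S"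
    using phi_closed unfolding ring_centralizer_def by blast
  then have "generate_ring S (\<phi> ` carrier R \<union> phi_centralizer)
      = generate_ring QS (\<phi> ` carrier R \<union> phi_centralizer)"
    using QS.subring_gen_equality[OF S_subring] by (simp flip: S_restrict)
  then show ?thesis using centralizing unfolding centralizing_def by simp
qed

section \<open>Representatives of the extension\<close>

definition phi_faithful :: "'a set \<Rightarrow> bool" where
  "phi_faithful I \<longleftrightarrow> (\<forall>z \<in> carrier QS. \<forall>z' \<in> carrier QS.
     (\<forall>i \<in> I. z \<otimes>\<^bsub>QS\<^esub> \<phi> i = z' \<otimes>\<^bsub>QS\<^esub> \<phi> i) \<longrightarrow> z = z')"

lemma phi_faithfulD:
  "phi_faithful I \<Longrightarrow> z \<in> carrier QS \<Longrightarrow> z' \<in> carrier QS \<Longrightarrow>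
    (\<And>i. i \<in> I \<Longrightarrow> z \<otimes>\<^bsub>QS\<^esub> \<phi> i = z' \<otimes>\<^bsub>QS\<^esub> \<phi> i) \<Longrightarrow> z = z'"
  unfolding phi_faithful_def by blast

lemma phi_faithful_carrier: "phi_faithful (carrier R)"
  unfolding phi_faithful_def using R_closed(1) phi_one by force

lemma phi_faithful_set_mult:
  assumes I: "I \<subseteq> carrier R" "I' \<subseteq> carrier R" and faithful: "phi_faithful I" "phi_faithful I'"
  shows "phi_faithful (I <#>\<^bsub>QR\<^esub> I')"
  unfolding phi_faithful_def
proof (intro ballI impI)
  fix z z' assume z: "z \<in> carrier QS" "z' \<in> carrier QS"
    and eq: "\<forall>i \<in> I <#>\<^bsub>QR\<^esub> I'. z \<otimes>\<^bsub>QS\<^esub> \<phi> i = z' \<otimes>\<^bsub>QS\<^esub> \<phi> i"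
  have "z \<otimes>\<^bsub>QS\<^esub> \<phi> a = z' \<otimes>\<^bsub>QS\<^esub> \<phi> a" if a: "a \<in> I" for a
  proof (rule phi_faithfulD[OF faithful(2)])
    fix b assume b: "b \<in> I'"
    have ab: "a \<in> carrier R" "b \<in> carrier R" using a b I by auto
    have "a \<otimes>\<^bsub>QR\<^esub> b \<in> I <#>\<^bsub>QR\<^esub> I'" using a b unfolding set_mult_def by blast
    then have "z \<otimes>\<^bsub>QS\<^esub> \<phi> (a \<otimes>\<^bsub>QR\<^esub> b) = z' \<otimes>\<^bsub>QS\<^esub> \<phi> (a \<otimes>\<^bsub>QR\<^esub> b)" using eq by blast
    then show "z \<otimes>\<^bsub>QS\<^esub> \<phi> a \<otimes>\<^bsub>QS\<^esub> \<phi> b = z' \<otimes>\<^bsub>QS\<^esub> \<phi> a \<otimes>\<^bsub>QS\<^esub> \<phi> b"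
      using ab z by (simp add: phi_mult QS.m_assoc S_in_QS phi_closed)
  qed (use S_in_QS[OF phi_closed] a I z in auto)
  then show "z = z'" using phi_faithfulD[OF faithful(1) z] by blast
qed

text \<open>The factor \<open>r\<close> makes the relation compatible with products, where
  \<open>x\<^sub>1 x\<^sub>2 r a b\<close> is read as \<open>x\<^sub>1 (x\<^sub>2 r a) b\<close>.\<close>

definition represents :: "'a set \<Rightarrow> 'a \<Rightarrow> 'b \<Rightarrow> bool" where
  "represents I x y \<longleftrightarrow> x \<in> carrier QR \<and> y \<in> carrier QS \<and> I \<subseteq> carrier R \<and> phi_faithful I \<and>
     (\<forall>i \<in> I. \<forall>r \<in> carrier R. x \<otimes>\<^bsub>QR\<^esub> r \<otimes>\<^bsub>QR\<^esub> i \<in> carrier R \<and>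
        y \<otimes>\<^bsub>QS\<^esub> \<phi> r \<otimes>\<^bsub>QS\<^esub> \<phi> i = \<phi> (x \<otimes>\<^bsub>QR\<^esub> r \<otimes>\<^bsub>QR\<^esub> i))"

lemma represents_closed: "represents I x y \<Longrightarrow> x \<in> carrier QR" "represents I x y \<Longrightarrow> y \<in> carrier QS"
  unfolding represents_def by simp_all

lemma represents_phi: "r \<in> carrier R \<Longrightarrow> represents (carrier R) r (\<phi> r)"
  unfolding represents_def
  by (auto simp: phi_faithful_carrier R_in_QR S_in_QS phi_closed phi_mult R_closed)

lemma represents_a_inv:
  assumes "represents I x y"
  shows "represents I (\<ominus>\<^bsub>QR\<^esub> x) (\<ominus>\<^bsub>QS\<^esub> y)"
  unfolding represents_def
proof (intro conjI ballI)
  fix i r assume i: "i \<in> I" and r: "r \<in> carrier R"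
  have x: "x \<in> carrier QR" "y \<in> carrier QS" "i \<in> carrier R"
    and xri: "x \<otimes>\<^bsub>QR\<^esub> r \<otimes>\<^bsub>QR\<^esub> i \<in> carrier R"
    and yri: "y \<otimes>\<^bsub>QS\<^esub> \<phi> r \<otimes>\<^bsub>QS\<^esub> \<phi> i = \<phi> (x \<otimes>\<^bsub>QR\<^esub> r \<otimes>\<^bsub>QR\<^esub> i)"
    using assms i r unfolding represents_def by auto
  have eq: "\<ominus>\<^bsub>QR\<^esub> x \<otimes>\<^bsub>QR\<^esub> r \<otimes>\<^bsub>QR\<^esub> i = \<ominus>\<^bsub>QR\<^esub> (x \<otimes>\<^bsub>QR\<^esub> r \<otimes>\<^bsub>QR\<^esub> i)"
    using x r by (simp add: QR.l_minus R_in_QR)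
  show "\<ominus>\<^bsub>QR\<^esub> x \<otimes>\<^bsub>QR\<^esub> r \<otimes>\<^bsub>QR\<^esub> i \<in> carrier R"
    unfolding eq using R_closed(2) xri .
  show "\<ominus>\<^bsub>QS\<^esub> y \<otimes>\<^bsub>QS\<^esub> \<phi> r \<otimes>\<^bsub>QS\<^esub> \<phi> i = \<phi> (\<ominus>\<^bsub>QR\<^esub> x \<otimes>\<^bsub>QR\<^esub> r \<otimes>\<^bsub>QR\<^esub> i)"
    unfolding eq using x r xri yri by (simp add: QS.l_minus phi_a_inv phi_closed S_in_QS)
qed (use assms in \<open>auto simp: represents_def\<close>)

lemma represents_add:
  assumes "represents I x y" "represents I' x' y'"
  shows "represents (I <#>\<^bsub>QR\<^esub> I') (x \<oplus>\<^bsub>QR\<^esub> x') (y \<oplus>\<^bsub>QS\<^esub> y')"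
  unfolding represents_def
proof (intro conjI ballI)
  have I: "I \<subseteq> carrier R" "I' \<subseteq> carrier R"
    using assms unfolding represents_def by auto
  then show "I <#>\<^bsub>QR\<^esub> I' \<subseteq> carrier R"
    unfolding set_mult_def using R_closed(3) by blast
  show "phi_faithful (I <#>\<^bsub>QR\<^esub> I')"
    using phi_faithful_set_mult I assms unfolding represents_def by blast
  fix i r assume i: "i \<in> I <#>\<^bsub>QR\<^esub> I'" and r: "r \<in> carrier R"
  then obtain a b where ab: "i = a \<otimes>\<^bsub>QR\<^esub> b" "a \<in> I" "b \<in> I'"
    unfolding set_mult_def by blast
  have abR: "a \<in> carrier R" "b \<in> carrier R" "r \<otimes>\<^bsub>QR\<^esub> a \<in> carrier R"
    using ab I r R_closed(3) by auto
  have x: "x \<in> carrier QR" "x' \<in> carrier QR" "y \<in> carrier QS" "y' \<in> carrier QS"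
    using assms unfolding represents_def by auto
  have xra: "x \<otimes>\<^bsub>QR\<^esub> r \<otimes>\<^bsub>QR\<^esub> a \<in> carrier R"
    and yra: "y \<otimes>\<^bsub>QS\<^esub> \<phi> r \<otimes>\<^bsub>QS\<^esub> \<phi> a = \<phi> (x \<otimes>\<^bsub>QR\<^esub> r \<otimes>\<^bsub>QR\<^esub> a)"
    using assms(1) ab r unfolding represents_def by auto
  have xrab: "x' \<otimes>\<^bsub>QR\<^esub> (r \<otimes>\<^bsub>QR\<^esub> a) \<otimes>\<^bsub>QR\<^esub> b \<in> carrier R"
    and yrab: "y' \<otimes>\<^bsub>QS\<^esub> \<phi> (r \<otimes>\<^bsub>QR\<^esub> a) \<otimes>\<^bsub>QS\<^esub> \<phi> b = \<phi> (x' \<otimes>\<^bsub>QR\<^esub> (r \<otimes>\<^bsub>QR\<^esub> a) \<otimes>\<^bsub>QR\<^esub> b)"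
    using assms(2) ab abR unfolding represents_def by auto
  have split: "(x \<oplus>\<^bsub>QR\<^esub> x') \<otimes>\<^bsub>QR\<^esub> r \<otimes>\<^bsub>QR\<^esub> i
      = (x \<otimes>\<^bsub>QR\<^esub> r \<otimes>\<^bsub>QR\<^esub> a) \<otimes>\<^bsub>QR\<^esub> b \<oplus>\<^bsub>QR\<^esub> x' \<otimes>\<^bsub>QR\<^esub> (r \<otimes>\<^bsub>QR\<^esub> a) \<otimes>\<^bsub>QR\<^esub> b"
    using x abR r ab(1) by (simp add: QR.l_distr QR.m_assoc R_in_QR)
  show "(x \<oplus>\<^bsub>QR\<^esub> x') \<otimes>\<^bsub>QR\<^esub> r \<otimes>\<^bsub>QR\<^esub> i \<in> carrier R"
    unfolding split using xra xrab abR R_closed by simp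
  have "(y \<oplus>\<^bsub>QS\<^esub> y') \<otimes>\<^bsub>QS\<^esub> \<phi> r \<otimes>\<^bsub>QS\<^esub> \<phi> i
      = (y \<otimes>\<^bsub>QS\<^esub> \<phi> r \<otimes>\<^bsub>QS\<^esub> \<phi> a) \<otimes>\<^bsub>QS\<^esub> \<phi> b \<oplus>\<^bsub>QS\<^esub> y' \<otimes>\<^bsub>QS\<^esub> \<phi> (r \<otimes>\<^bsub>QR\<^esub> a) \<otimes>\<^bsub>QS\<^esub> \<phi> b"
    using x abR r ab(1) by (simp add: QS.l_distr QS.m_assoc phi_mult phi_closed S_in_QS)
  then show "(y \<oplus>\<^bsub>QS\<^esub> y') \<otimes>\<^bsub>QS\<^esub> \<phi> r \<otimes>\<^bsub>QS\<^esub> \<phi> i = \<phi> ((x \<oplus>\<^bsub>QR\<^esub> x') \<otimes>\<^bsub>QR\<^esub> r \<otimes>\<^bsub>QR\<^esub> i)"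
    unfolding split yra yrab using xra xrab abR by (simp add: phi_mult phi_add R_closed)
qed (use assms in \<open>auto simp: represents_def\<close>)

lemma represents_mult:
  assumes "represents I x y" "represents I' x' y'"
  shows "represents (I' <#>\<^bsub>QR\<^esub> I) (x \<otimes>\<^bsub>QR\<^esub> x') (y \<otimes>\<^bsub>QS\<^esub> y')"
  unfolding represents_def
proof (intro conjI ballI)
  have I: "I \<subseteq> carrier R" "I' \<subseteq> carrier R"
    using assms unfolding represents_def by auto
  then show "I' <#>\<^bsub>QR\<^esub> I \<subseteq> carrier R"
    unfolding set_mult_def using R_closed(3) by blast
  show "phi_faithful (I' <#>\<^bsub>QR\<^esub> I)"
    using phi_faithful_set_mult I assms unfolding represents_def by blast
  fix i r assume i: "i \<in> I' <#>\<^bsub>QR\<^esub> I" and r: "r \<in> carrier R"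
  then obtain a b where ab: "i = a \<otimes>\<^bsub>QR\<^esub> b" "a \<in> I'" "b \<in> I"
    unfolding set_mult_def by blast
  have abR: "a \<in> carrier R" "b \<in> carrier R"
    using ab I by auto
  have x: "x \<in> carrier QR" "x' \<in> carrier QR" "y \<in> carrier QS" "y' \<in> carrier QS"
    using assms unfolding represents_def by auto
  have xra: "x' \<otimes>\<^bsub>QR\<^esub> r \<otimes>\<^bsub>QR\<^esub> a \<in> carrier R"
    and yra: "y' \<otimes>\<^bsub>QS\<^esub> \<phi> r \<otimes>\<^bsub>QS\<^esub> \<phi> a = \<phi> (x' \<otimes>\<^bsub>QR\<^esub> r \<otimes>\<^bsub>QR\<^esub> a)"
    using assms(2) ab r unfolding represents_def by auto
  have xrab: "x \<otimes>\<^bsub>QR\<^esub> (x' \<otimes>\<^bsub>QR\<^esub> r \<otimes>\<^bsub>QR\<^esub> a) \<otimes>\<^bsub>QR\<^esub> b \<in> carrier R"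
    and yrab: "y \<otimes>\<^bsub>QS\<^esub> \<phi> (x' \<otimes>\<^bsub>QR\<^esub> r \<otimes>\<^bsub>QR\<^esub> a) \<otimes>\<^bsub>QS\<^esub> \<phi> b
      = \<phi> (x \<otimes>\<^bsub>QR\<^esub> (x' \<otimes>\<^bsub>QR\<^esub> r \<otimes>\<^bsub>QR\<^esub> a) \<otimes>\<^bsub>QR\<^esub> b)"
    using assms(1) ab xra unfolding represents_def by auto
  have split: "x \<otimes>\<^bsub>QR\<^esub> x' \<otimes>\<^bsub>QR\<^esub> r \<otimes>\<^bsub>QR\<^esub> i = x \<otimes>\<^bsub>QR\<^esub> (x' \<otimes>\<^bsub>QR\<^esub> r \<otimes>\<^bsub>QR\<^esub> a) \<otimes>\<^bsub>QR\<^esub> b"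
    using x abR r ab(1) by (simp add: QR.m_assoc R_in_QR)
  show "x \<otimes>\<^bsub>QR\<^esub> x' \<otimes>\<^bsub>QR\<^esub> r \<otimes>\<^bsub>QR\<^esub> i \<in> carrier R"
    unfolding split using xrab .
  have "y \<otimes>\<^bsub>QS\<^esub> y' \<otimes>\<^bsub>QS\<^esub> \<phi> r \<otimes>\<^bsub>QS\<^esub> \<phi> i
      = y \<otimes>\<^bsub>QS\<^esub> (y' \<otimes>\<^bsub>QS\<^esub> \<phi> r \<otimes>\<^bsub>QS\<^esub> \<phi> a) \<otimes>\<^bsub>QS\<^esub> \<phi> b"
    using x abR r ab(1) by (simp add: QS.m_assoc phi_mult phi_closed S_in_QS)
  then show "y \<otimes>\<^bsub>QS\<^esub> y' \<otimes>\<^bsub>QS\<^esub> \<phi> r \<otimes>\<^bsub>QS\<^esub> \<phi> i = \<phi> (x \<otimes>\<^bsub>QR\<^esub> x' \<otimes>\<^bsub>QR\<^esub> r \<otimes>\<^bsub>QR\<^esub> i)"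
    unfolding split yra yrab .
qed (use assms in \<open>auto simp: represents_def\<close>)

lemma represents_unique:
  assumes "represents I x y" "represents I' x y'"
  shows "y = y'"
proof -
  have I: "I \<subseteq> carrier R" "I' \<subseteq> carrier R" and y: "y \<in> carrier QS" "y' \<in> carrier QS"
    and x: "x \<in> carrier QR" and faithful: "phi_faithful (I <#>\<^bsub>QR\<^esub> I')"
    using assms phi_faithful_set_mult unfolding represents_def by auto
  show ?thesis
  proof (rule phi_faithfulD[OF faithful y])
    fix i assume "i \<in> I <#>\<^bsub>QR\<^esub> I'"
    then obtain a b where ab: "i = a \<otimes>\<^bsub>QR\<^esub> b" "a \<in> I" "b \<in> I'"
      unfolding set_mult_def by blast
    have abR: "a \<in> carrier R" "b \<in> carrier R" using ab I by auto
    have "x \<otimes>\<^bsub>QR\<^esub> \<one>\<^bsub>QR\<^esub> \<otimes>\<^bsub>QR\<^esub> a \<in> carrier R \<and>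
        y \<otimes>\<^bsub>QS\<^esub> \<phi> \<one>\<^bsub>QR\<^esub> \<otimes>\<^bsub>QS\<^esub> \<phi> a = \<phi> (x \<otimes>\<^bsub>QR\<^esub> \<one>\<^bsub>QR\<^esub> \<otimes>\<^bsub>QR\<^esub> a)"
      using assms(1) ab(2) R_closed(1) unfolding represents_def by blast
    then have xa: "x \<otimes>\<^bsub>QR\<^esub> a \<in> carrier R" and ya: "y \<otimes>\<^bsub>QS\<^esub> \<phi> a = \<phi> (x \<otimes>\<^bsub>QR\<^esub> a)"
      using x y by (simp_all add: phi_one)
    have "y' \<otimes>\<^bsub>QS\<^esub> \<phi> a \<otimes>\<^bsub>QS\<^esub> \<phi> b = \<phi> (x \<otimes>\<^bsub>QR\<^esub> a \<otimes>\<^bsub>QR\<^esub> b)"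
      using assms(2) ab abR unfolding represents_def by auto
    then show "y \<otimes>\<^bsub>QS\<^esub> \<phi> i = y' \<otimes>\<^bsub>QS\<^esub> \<phi> i"
      using ab(1) abR y xa ya by (simp add: phi_mult QS.m_assoc[symmetric] phi_closed S_in_QS)
  qed
qed

section \<open>The elements of \<open>C_phi\<close>\<close>

lemma C_phi_ext_center: "q \<in> C_phi R QR S \<phi> \<Longrightarrow> q \<in> ext_center QR"
  and C_phi_dense: "q \<in> C_phi R QR S \<phi> \<Longrightarrow> genideal S (\<phi> ` Dq R QR q) \<in> dense_ideals S"
  unfolding C_phi_def by auto

lemma Dq_subset: "Dq R QR q \<subseteq> carrier R"
  unfolding Dq_def by blast

lemma Dq_sandwich:
  assumes "d \<in> Dq R QR q" "r \<in> carrier R"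
  shows "q \<otimes>\<^bsub>QR\<^esub> r \<otimes>\<^bsub>QR\<^esub> d \<in> carrier R" "d \<otimes>\<^bsub>QR\<^esub> r \<otimes>\<^bsub>QR\<^esub> q \<in> carrier R"
  using assms unfolding Dq_def sandwich_def by blast+

lemma Dq_mult_closed:
  assumes "q \<in> carrier QR" "d \<in> Dq R QR q"
  shows "q \<otimes>\<^bsub>QR\<^esub> d \<in> carrier R" "d \<otimes>\<^bsub>QR\<^esub> q \<in> carrier R"
proof -
  have "d \<in> carrier QR" using assms(2) Dq_subset R_in_QR by blast
  then show "q \<otimes>\<^bsub>QR\<^esub> d \<in> carrier R" "d \<otimes>\<^bsub>QR\<^esub> q \<in> carrier R"
    using Dq_sandwich[OF assms(2) R_closed(1)] assms(1) by simp_all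
qed

lemma Dq_left_ideal:
  assumes q: "q \<in> carrier QR" and r: "r \<in> carrier R" and d: "d \<in> Dq R QR q"
  shows "r \<otimes>\<^bsub>QR\<^esub> d \<in> Dq R QR q"
proof -
  have dR: "d \<in> carrier R" using d Dq_subset by blast
  have "q \<otimes>\<^bsub>QR\<^esub> x \<otimes>\<^bsub>QR\<^esub> (r \<otimes>\<^bsub>QR\<^esub> d) \<in> carrier R"
    and "r \<otimes>\<^bsub>QR\<^esub> d \<otimes>\<^bsub>QR\<^esub> x \<otimes>\<^bsub>QR\<^esub> q \<in> carrier R" if x: "x \<in> carrier R" for x
  proof -
    show "q \<otimes>\<^bsub>QR\<^esub> x \<otimes>\<^bsub>QR\<^esub> (r \<otimes>\<^bsub>QR\<^esub> d) \<in> carrier R"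
      using Dq_sandwich(1)[OF d R_closed(3)[OF x r]] q x r dR by (simp add: QR.m_assoc R_in_QR)
    show "r \<otimes>\<^bsub>QR\<^esub> d \<otimes>\<^bsub>QR\<^esub> x \<otimes>\<^bsub>QR\<^esub> q \<in> carrier R"
      using R_closed(3)[OF r Dq_sandwich(2)[OF d x]] q x r dR by (simp add: QR.m_assoc R_in_QR)
  qed
  then show ?thesis
    using R_closed(3)[OF r dR] unfolding Dq_def sandwich_def by blast
qed

text \<open>\<open>twists D p x y\<close>: on \<open>\<phi>(D)\<close> the element \<open>y\<close> acts as \<open>x\<close> times the (yet to be
  constructed) image of \<open>p\<close>.\<close>

definition twists :: "'a set \<Rightarrow> 'a \<Rightarrow> 'b \<Rightarrow> 'b \<Rightarrow> bool" where
  "twists D p x y \<longleftrightarrow> x \<in> carrier QS \<and> y \<in> carrier QS \<and>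
     (\<forall>e \<in> D. y \<otimes>\<^bsub>QS\<^esub> \<phi> e = x \<otimes>\<^bsub>QS\<^esub> \<phi> (p \<otimes>\<^bsub>QR\<^esub> e))"

lemma twists_add:
  assumes D: "D \<subseteq> carrier R" "\<And>e. e \<in> D \<Longrightarrow> p \<otimes>\<^bsub>QR\<^esub> e \<in> carrier R"
    and "twists D p x y" "twists D p x' y'"
  shows "twists D p (x \<oplus>\<^bsub>QS\<^esub> x') (y \<oplus>\<^bsub>QS\<^esub> y')"
  using assms unfolding twists_def
  by (auto simp: QS.l_distr phi_closed S_in_QS subset_iff)

lemma twists_a_inv:
  assumes D: "D \<subseteq> carrier R" "\<And>e. e \<in> D \<Longrightarrow> p \<otimes>\<^bsub>QR\<^esub> e \<in> carrier R"
    and "twists D p x y"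
  shows "twists D p (\<ominus>\<^bsub>QS\<^esub> x) (\<ominus>\<^bsub>QS\<^esub> y)"
  using assms unfolding twists_def
  by (auto simp: QS.l_minus phi_closed S_in_QS subset_iff)

lemma twists_mult_left:
  assumes D: "D \<subseteq> carrier R" "\<And>e. e \<in> D \<Longrightarrow> p \<otimes>\<^bsub>QR\<^esub> e \<in> carrier R"
    and "twists D p x y" "t \<in> carrier QS"
  shows "twists D p (t \<otimes>\<^bsub>QS\<^esub> x) (t \<otimes>\<^bsub>QS\<^esub> y)"
  using assms unfolding twists_def
  by (auto simp: QS.m_assoc phi_closed S_in_QS subset_iff)

lemma twists_unique:
  assumes "phi_faithful D" "twists D p x y" "twists D p x y'"
  shows "y = y'"
proof (rule phi_faithfulD[OF assms(1)])
  show "y \<otimes>\<^bsub>QS\<^esub> \<phi> e = y' \<otimes>\<^bsub>QS\<^esub> \<phi> e" if "e \<in> D" for e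
    using assms(2,3) that unfolding twists_def by simp
qed (use assms(2,3) in \<open>simp_all add: twists_def\<close>)

lemma twists_mult_phi:
  assumes D: "D \<subseteq> carrier R" "\<And>r e. r \<in> carrier R \<Longrightarrow> e \<in> D \<Longrightarrow> r \<otimes>\<^bsub>QR\<^esub> e \<in> D"
    and p: "p \<in> ext_center QR" "\<And>e. e \<in> D \<Longrightarrow> p \<otimes>\<^bsub>QR\<^esub> e \<in> carrier R"
    and r: "r \<in> carrier R" and xy: "twists D p x y"
  shows "twists D p (x \<otimes>\<^bsub>QS\<^esub> \<phi> r) (y \<otimes>\<^bsub>QS\<^esub> \<phi> r)"
  unfolding twists_def
proof (intro conjI ballI)
  have x: "x \<in> carrier QS" "y \<in> carrier QS" using xy unfolding twists_def by auto
  then show "x \<otimes>\<^bsub>QS\<^esub> \<phi> r \<in> carrier QS" "y \<otimes>\<^bsub>QS\<^esub> \<phi> r \<in> carrier QS"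
    using r by (simp_all add: phi_closed S_in_QS)
  fix e assume e: "e \<in> D"
  have eR: "e \<in> carrier R" using e D(1) by blast
  have "p \<otimes>\<^bsub>QR\<^esub> (r \<otimes>\<^bsub>QR\<^esub> e) = r \<otimes>\<^bsub>QR\<^esub> (p \<otimes>\<^bsub>QR\<^esub> e)"
    using ext_center_commute[OF p(1), of r] ext_center_closed[OF p(1)] r eR
    by (metis QR.m_assoc R_in_QR)
  then have "y \<otimes>\<^bsub>QS\<^esub> \<phi> (r \<otimes>\<^bsub>QR\<^esub> e) = x \<otimes>\<^bsub>QS\<^esub> \<phi> (r \<otimes>\<^bsub>QR\<^esub> (p \<otimes>\<^bsub>QR\<^esub> e))"
    using xy D(2)[OF r e] unfolding twists_def by metis
  then show "y \<otimes>\<^bsub>QS\<^esub> \<phi> r \<otimes>\<^bsub>QS\<^esub> \<phi> e = x \<otimes>\<^bsub>QS\<^esub> \<phi> r \<otimes>\<^bsub>QS\<^esub> \<phi> (p \<otimes>\<^bsub>QR\<^esub> e)"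
    using x r eR p(2)[OF e] by (simp add: phi_mult QS.m_assoc phi_closed S_in_QS)
qed

lemma twists_mult_centralizer:
  assumes D: "D \<subseteq> carrier R" "\<And>e. e \<in> D \<Longrightarrow> p \<otimes>\<^bsub>QR\<^esub> e \<in> carrier R"
    and c: "c \<in> phi_centralizer" and xy: "twists D p x y"
  shows "twists D p (x \<otimes>\<^bsub>QS\<^esub> c) (y \<otimes>\<^bsub>QS\<^esub> c)"
  unfolding twists_def
proof (intro conjI ballI)
  have x: "x \<in> carrier QS" "y \<in> carrier QS" using xy unfolding twists_def by auto
  have cQS: "c \<in> carrier QS" using phi_centralizer_closed[OF c] .
  show "x \<otimes>\<^bsub>QS\<^esub> c \<in> carrier QS" "y \<otimes>\<^bsub>QS\<^esub> c \<in> carrier QS" using x cQS by simp_all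
  fix e assume e: "e \<in> D"
  have eR: "e \<in> carrier R" using e D(1) by blast
  have "y \<otimes>\<^bsub>QS\<^esub> c \<otimes>\<^bsub>QS\<^esub> \<phi> e = y \<otimes>\<^bsub>QS\<^esub> \<phi> e \<otimes>\<^bsub>QS\<^esub> c"
    using x cQS eR phi_centralizer_commute[OF c eR] by (simp add: QS.m_assoc phi_closed S_in_QS)
  also have "\<dots> = x \<otimes>\<^bsub>QS\<^esub> \<phi> (p \<otimes>\<^bsub>QR\<^esub> e) \<otimes>\<^bsub>QS\<^esub> c"
    using xy e unfolding twists_def by simp
  also have "\<dots> = x \<otimes>\<^bsub>QS\<^esub> c \<otimes>\<^bsub>QS\<^esub> \<phi> (p \<otimes>\<^bsub>QR\<^esub> e)"
    using x cQS D(2)[OF e] phi_centralizer_commute[OF c D(2)[OF e]]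
    by (simp add: QS.m_assoc phi_closed S_in_QS)
  finally show "y \<otimes>\<^bsub>QS\<^esub> c \<otimes>\<^bsub>QS\<^esub> \<phi> e = x \<otimes>\<^bsub>QS\<^esub> c \<otimes>\<^bsub>QS\<^esub> \<phi> (p \<otimes>\<^bsub>QR\<^esub> e)" .
qed

text \<open>This is where \<open>\<phi>\<close> being centralizing enters: the admissible right factors form
  a subring containing \<open>\<phi>(R)\<close> and its centraliser.\<close>

lemma twists_mult_right:
  assumes D: "D \<subseteq> carrier R" "\<And>r e. r \<in> carrier R \<Longrightarrow> e \<in> D \<Longrightarrow> r \<otimes>\<^bsub>QR\<^esub> e \<in> D"
    and p: "p \<in> ext_center QR" "\<And>e. e \<in> D \<Longrightarrow> p \<otimes>\<^bsub>QR\<^esub> e \<in> carrier R"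
    and t: "t \<in> carrier S" and xy: "twists D p x y"
  shows "twists D p (x \<otimes>\<^bsub>QS\<^esub> t) (y \<otimes>\<^bsub>QS\<^esub> t)"
proof -
  let ?T = "{t \<in> carrier QS. \<forall>x y. twists D p x y \<longrightarrow> twists D p (x \<otimes>\<^bsub>QS\<^esub> t) (y \<otimes>\<^bsub>QS\<^esub> t)}"
  have "subring ?T QS"
    using twists_add[OF D(1) p(2)] twists_a_inv[OF D(1) p(2)]
    by (intro QS.subring_right_stabilizer) (auto simp: twists_def)
  moreover have "\<phi> r \<in> ?T" if "r \<in> carrier R" for r
    using that twists_mult_phi[OF D p that] phi_closed S_in_QS by blast
  moreover have "c \<in> ?T" if "c \<in> phi_centralizer" for c
    using that twists_mult_centralizer[OF D(1) p(2) that] phi_centralizer_closed by blast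
  ultimately have "generate_ring QS (\<phi> ` carrier R \<union> phi_centralizer) \<subseteq> ?T"
    by (intro QS.generate_ring_min_subring1) (auto simp: phi_closed S_in_QS phi_centralizer_closed)
  then show ?thesis using t xy S_generated by blast
qed

lemma twists_phi_Dq:
  assumes q: "q \<in> carrier QR" and d: "d \<in> Dq R QR q"
  shows "twists (Dq R QR q) q (\<phi> d) (\<phi> (d \<otimes>\<^bsub>QR\<^esub> q))"
proof -
  have dR: "d \<in> carrier R" "d \<otimes>\<^bsub>QR\<^esub> q \<in> carrier R"
    using d Dq_subset Dq_mult_closed(2)[OF q d] by auto
  have "\<phi> (d \<otimes>\<^bsub>QR\<^esub> q) \<otimes>\<^bsub>QS\<^esub> \<phi> e = \<phi> d \<otimes>\<^bsub>QS\<^esub> \<phi> (q \<otimes>\<^bsub>QR\<^esub> e)" if e: "e \<in> Dq R QR q" for e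
  proof -
    have eR: "e \<in> carrier R" "q \<otimes>\<^bsub>QR\<^esub> e \<in> carrier R"
      using e Dq_subset Dq_mult_closed(1)[OF q e] by auto
    then have "d \<otimes>\<^bsub>QR\<^esub> q \<otimes>\<^bsub>QR\<^esub> e = d \<otimes>\<^bsub>QR\<^esub> (q \<otimes>\<^bsub>QR\<^esub> e)"
      using q dR by (simp add: QR.m_assoc R_in_QR)
    then show ?thesis using dR eR by (simp flip: phi_mult)
  qed
  then show ?thesis unfolding twists_def using dR by (simp add: phi_closed S_in_QS)
qed

lemma phi_faithful_Dq:
  assumes q: "q \<in> C_phi R QR S \<phi>"
  shows "phi_faithful (Dq R QR q)"
  unfolding phi_faithful_def
proof (intro ballI impI)
  let ?D = "Dq R QR q"
  fix z z' assume z: "z \<in> carrier QS" "z' \<in> carrier QS"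
    and eq: "\<forall>d \<in> ?D. z \<otimes>\<^bsub>QS\<^esub> \<phi> d = z' \<otimes>\<^bsub>QS\<^esub> \<phi> d"
  have qQR: "q \<in> carrier QR" using ext_center_closed[OF C_phi_ext_center[OF q]] .
  have DQR: "d \<in> ?D \<Longrightarrow> d \<in> carrier QR" for d using Dq_subset R_in_QR by blast
  have tw: "twists ?D \<one>\<^bsub>QR\<^esub> z z'"
    using z eq DQR unfolding twists_def by simp
  have za: "z \<otimes>\<^bsub>QS\<^esub> (a \<otimes>\<^bsub>QS\<^esub> \<phi> d) = z' \<otimes>\<^bsub>QS\<^esub> (a \<otimes>\<^bsub>QS\<^esub> \<phi> d)"
    if a: "a \<in> carrier S" and d: "d \<in> ?D" for a d
  proof -
    have "twists ?D \<one>\<^bsub>QR\<^esub> (z \<otimes>\<^bsub>QS\<^esub> a) (z' \<otimes>\<^bsub>QS\<^esub> a)"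
    proof (rule twists_mult_right[OF Dq_subset Dq_left_ideal[OF qQR] ext_center_one[OF QR.ring_axioms]])
      show "\<one>\<^bsub>QR\<^esub> \<otimes>\<^bsub>QR\<^esub> e \<in> carrier R" if "e \<in> ?D" for e
        using that DQR Dq_subset by auto
    qed (use a tw in auto)
    then have "z' \<otimes>\<^bsub>QS\<^esub> a \<otimes>\<^bsub>QS\<^esub> \<phi> d = z \<otimes>\<^bsub>QS\<^esub> a \<otimes>\<^bsub>QS\<^esub> \<phi> d"
      using d DQR unfolding twists_def by simp
    moreover have "a \<in> carrier QS" "\<phi> d \<in> carrier QS"
      using a d Dq_subset phi_closed S_in_QS by auto
    ultimately show ?thesis using z by (simp add: QS.m_assoc)
  qed
  let ?K = "{x \<in> carrier S. \<forall>a \<in> carrier S. z \<otimes>\<^bsub>QS\<^esub> (a \<otimes>\<^bsub>QS\<^esub> x) = z' \<otimes>\<^bsub>QS\<^esub> (a \<otimes>\<^bsub>QS\<^esub> x)}"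
  have "ideal ?K S"
    using ideal_mult_equalizer[OF QS.ring_axioms S_subring z] by (simp flip: S_restrict)
  moreover have "\<phi> ` ?D \<subseteq> ?K"
    using za Dq_subset phi_closed by blast
  ultimately have K: "genideal S (\<phi> ` ?D) \<subseteq> ?K"
    using ring.genideal_minimal[OF ring_S] by blast
  have "z \<otimes>\<^bsub>QS\<^esub> x = z' \<otimes>\<^bsub>QS\<^esub> x" if x: "x \<in> genideal S (\<phi> ` ?D)" for x
  proof -
    have "x \<in> carrier QS" "z \<otimes>\<^bsub>QS\<^esub> (\<one>\<^bsub>QS\<^esub> \<otimes>\<^bsub>QS\<^esub> x) = z' \<otimes>\<^bsub>QS\<^esub> (\<one>\<^bsub>QS\<^esub> \<otimes>\<^bsub>QS\<^esub> x)"
      using K x S_closed(1) S_in_QS by auto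
    then show ?thesis by simp
  qed
  then show "z = z'" using sym_quot_cancel[OF S_QS C_phi_dense[OF q] z] by blast
qed

lemma ideal_twistable:
  assumes qZ: "q \<in> ext_center QR"
  shows "ideal {j \<in> carrier S. \<exists>s \<in> carrier S. twists (Dq R QR q) q j s} S"
proof -
  let ?D = "Dq R QR q"
  let ?K = "{j \<in> carrier S. \<exists>s \<in> carrier S. twists ?D q j s}"
  have qQR: "q \<in> carrier QR" using ext_center_closed[OF qZ] .
  have D: "?D \<subseteq> carrier R" "\<And>e. e \<in> ?D \<Longrightarrow> q \<otimes>\<^bsub>QR\<^esub> e \<in> carrier R"
    using Dq_subset Dq_mult_closed(1)[OF qQR] by auto
  have "ideal ?K (QS\<lparr>carrier := carrier S\<rparr>)"
  proof (rule subring_idealI[OF QS.ring_axioms S_subring])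
    have "twists ?D q \<zero>\<^bsub>QS\<^esub> \<zero>\<^bsub>QS\<^esub>"
      using D phi_closed S_in_QS unfolding twists_def by auto
    then show "\<zero>\<^bsub>QS\<^esub> \<in> ?K" using subringE(2)[OF S_subring] by blast
  next
    fix a b assume "a \<in> ?K" "b \<in> ?K"
    then obtain s s' where "a \<in> carrier S" "s \<in> carrier S" "twists ?D q a s"
      and "b \<in> carrier S" "s' \<in> carrier S" "twists ?D q b s'" by blast
    then show "a \<oplus>\<^bsub>QS\<^esub> b \<in> ?K"
      using twists_add[OF D] S_closed(4) by blast
  next
    fix a assume "a \<in> ?K"
    then obtain s where "a \<in> carrier S" "s \<in> carrier S" "twists ?D q a s" by blast
    then show "\<ominus>\<^bsub>QS\<^esub> a \<in> ?K"
      using twists_a_inv[OF D] S_closed(2) by blast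
  next
    fix a x assume "a \<in> ?K" and x: "x \<in> carrier S"
    then obtain s where "a \<in> carrier S" "s \<in> carrier S" "twists ?D q a s" by blast
    then show "x \<otimes>\<^bsub>QS\<^esub> a \<in> ?K" "a \<otimes>\<^bsub>QS\<^esub> x \<in> ?K"
      using twists_mult_left[OF D _ S_in_QS[OF x]] S_closed(3)[OF x]
        twists_mult_right[OF D(1) Dq_left_ideal[OF qQR] qZ D(2) x] S_closed(3)[OF _ x]
      by blast+
  qed auto
  then show ?thesis by (simp flip: S_restrict)
qed

lemma twists_genideal:
  assumes q: "q \<in> C_phi R QR S \<phi>" and j: "j \<in> genideal S (\<phi> ` Dq R QR q)"
  shows "\<exists>s \<in> carrier S. twists (Dq R QR q) q j s"
proof -
  let ?D = "Dq R QR q"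
  have qZ: "q \<in> ext_center QR" using C_phi_ext_center[OF q] .
  have qQR: "q \<in> carrier QR" using ext_center_closed[OF qZ] .
  have "\<phi> ` ?D \<subseteq> {j \<in> carrier S. \<exists>s \<in> carrier S. twists ?D q j s}"
  proof
    fix j assume "j \<in> \<phi> ` ?D"
    then obtain d where d: "d \<in> ?D" "j = \<phi> d" by blast
    then have "\<phi> d \<in> carrier S" "\<phi> (d \<otimes>\<^bsub>QR\<^esub> q) \<in> carrier S"
      using Dq_subset Dq_mult_closed(2)[OF qQR] phi_closed by auto
    then show "j \<in> {j \<in> carrier S. \<exists>s \<in> carrier S. twists ?D q j s}"
      using d twists_phi_Dq[OF qQR d(1)] by blast
  qed
  then have "genideal S (\<phi> ` ?D) \<subseteq> {j \<in> carrier S. \<exists>s \<in> carrier S. twists ?D q j s}"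
    using ring.genideal_minimal[OF ring_S ideal_twistable[OF qZ]] by blast
  then show ?thesis using j by blast
qed

text \<open>The twist \<open>j \<mapsto> s\<close> is a well-defined \<open>S\<close>-bimodule map on the dense ideal
  \<open>\<langle>\<phi> D\<^sub>q\<rangle>\<close>, hence multiplication by a central element of \<open>Q S\<close>.\<close>

lemma C_phi_twist_center:
  assumes q: "q \<in> C_phi R QR S \<phi>"
  shows "\<exists>y \<in> ext_center QS. \<forall>j \<in> genideal S (\<phi> ` Dq R QR q). twists (Dq R QR q) q j (y \<otimes>\<^bsub>QS\<^esub> j)"
proof -
  let ?D = "Dq R QR q" and ?J = "genideal S (\<phi> ` Dq R QR q)"
  have qZ: "q \<in> ext_center QR" using C_phi_ext_center[OF q] .
  have qQR: "q \<in> carrier QR" using ext_center_closed[OF qZ] .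
  have D: "?D \<subseteq> carrier R" "\<And>e. e \<in> ?D \<Longrightarrow> q \<otimes>\<^bsub>QR\<^esub> e \<in> carrier R"
    using Dq_subset Dq_mult_closed(1)[OF qQR] by auto
  define f where "f j = (THE s. s \<in> carrier S \<and> twists ?D q j s)" for j
  have f_eq: "f j = s" if s: "s \<in> carrier S" "twists ?D q j s" for j s
    unfolding f_def
  proof (rule the_equality)
    show "\<And>s'. s' \<in> carrier S \<and> twists ?D q j s' \<Longrightarrow> s' = s"
      using twists_unique[OF phi_faithful_Dq[OF q]] s by blast
  qed (use s in blast)
  have f: "f j \<in> carrier S" "twists ?D q j (f j)" if j: "j \<in> ?J" for j
  proof -
    obtain s where "s \<in> carrier S" "twists ?D q j s" using twists_genideal[OF q j] by blast
    then show "f j \<in> carrier S" "twists ?D q j (f j)" using f_eq by simp_all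
  qed
  have "\<exists>y \<in> ext_center QS. \<forall>j \<in> ?J. y \<otimes>\<^bsub>QS\<^esub> j = f j"
  proof (rule sym_quot_bimodule_map_ext_center[OF S_QS C_phi_dense[OF q]])
    show "f \<in> ?J \<rightarrow> carrier S" using f(1) by blast
    show "f (j \<oplus>\<^bsub>QS\<^esub> j') = f j \<oplus>\<^bsub>QS\<^esub> f j'" if "j \<in> ?J" "j' \<in> ?J" for j j'
      using that f twists_add[OF D] S_closed(4) by (intro f_eq) auto
    show "f (s \<otimes>\<^bsub>QS\<^esub> j) = s \<otimes>\<^bsub>QS\<^esub> f j" if "j \<in> ?J" "s \<in> carrier S" for j s
      using that f twists_mult_left[OF D] S_closed(3) S_in_QS by (intro f_eq) auto
    show "f (j \<otimes>\<^bsub>QS\<^esub> s) = f j \<otimes>\<^bsub>QS\<^esub> s" if "j \<in> ?J" "s \<in> carrier S" for j s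
      using that f twists_mult_right[OF D(1) Dq_left_ideal[OF qQR] qZ D(2)] S_closed(3)
      by (intro f_eq) auto
  qed
  then obtain y where "y \<in> ext_center QS" "\<And>j. j \<in> ?J \<Longrightarrow> y \<otimes>\<^bsub>QS\<^esub> j = f j" by blast
  then show ?thesis using f(2) by (intro bexI[of _ y] ballI) simp_all
qed

lemma C_phi_represented:
  assumes q: "q \<in> C_phi R QR S \<phi>"
  shows "\<exists>y \<in> ext_center QS. represents (Dq R QR q) q y"
proof -
  let ?D = "Dq R QR q"
  obtain y where y: "y \<in> ext_center QS"
    and yJ: "\<And>j. j \<in> genideal S (\<phi> ` ?D) \<Longrightarrow> twists ?D q j (y \<otimes>\<^bsub>QS\<^esub> j)"
    using C_phi_twist_center[OF q] by blast
  have qZ: "q \<in> ext_center QR" using C_phi_ext_center[OF q] .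
  have qQR: "q \<in> carrier QR" using ext_center_closed[OF qZ] .
  have yd: "y \<otimes>\<^bsub>QS\<^esub> \<phi> d = \<phi> (q \<otimes>\<^bsub>QR\<^esub> d)" if d: "d \<in> ?D" for d
  proof -
    have dR: "d \<in> carrier R" using d Dq_subset by blast
    have "\<phi> ` ?D \<subseteq> carrier S" using Dq_subset phi_closed by blast
    then have "\<phi> d \<in> genideal S (\<phi> ` ?D)" using ring.genideal_self[OF ring_S] d by blast
    then have "twists ?D q (\<phi> d) (y \<otimes>\<^bsub>QS\<^esub> \<phi> d)" by (rule yJ)
    then have "y \<otimes>\<^bsub>QS\<^esub> \<phi> d = \<phi> (d \<otimes>\<^bsub>QR\<^esub> q)"
      using twists_unique[OF phi_faithful_Dq[OF q] _ twists_phi_Dq[OF qQR d]] by blast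
    also have "d \<otimes>\<^bsub>QR\<^esub> q = q \<otimes>\<^bsub>QR\<^esub> d"
      using ext_center_commute[OF qZ R_in_QR[OF dR]] by simp
    finally show ?thesis .
  qed
  have "y \<otimes>\<^bsub>QS\<^esub> \<phi> r \<otimes>\<^bsub>QS\<^esub> \<phi> d = \<phi> (q \<otimes>\<^bsub>QR\<^esub> r \<otimes>\<^bsub>QR\<^esub> d)"
    if r: "r \<in> carrier R" and d: "d \<in> ?D" for r d
  proof -
    have dR: "d \<in> carrier R" "q \<otimes>\<^bsub>QR\<^esub> d \<in> carrier R"
      using d Dq_subset Dq_mult_closed(1)[OF qQR d] by auto
    have "y \<otimes>\<^bsub>QS\<^esub> \<phi> r \<otimes>\<^bsub>QS\<^esub> \<phi> d = \<phi> r \<otimes>\<^bsub>QS\<^esub> (y \<otimes>\<^bsub>QS\<^esub> \<phi> d)"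
      using ext_center_commute[OF y S_in_QS[OF phi_closed[OF r]]] ext_center_closed[OF y] r dR
      by (simp add: QS.m_assoc phi_closed S_in_QS)
    also have "\<dots> = \<phi> (r \<otimes>\<^bsub>QR\<^esub> (q \<otimes>\<^bsub>QR\<^esub> d))" using yd[OF d] r dR by (simp add: phi_mult)
    also have "r \<otimes>\<^bsub>QR\<^esub> (q \<otimes>\<^bsub>QR\<^esub> d) = q \<otimes>\<^bsub>QR\<^esub> r \<otimes>\<^bsub>QR\<^esub> d"
      using ext_center_commute[OF qZ R_in_QR[OF r]] qQR r dR by (simp add: QR.m_assoc R_in_QR)
    finally show ?thesis .
  qed
  then have "represents ?D q y"
    unfolding represents_def
    using qQR ext_center_closed[OF y] Dq_subset phi_faithful_Dq[OF q] Dq_sandwich(1)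
    by (intro conjI ballI) simp_all
  then show ?thesis using y by blast
qed

section \<open>The extension\<close>

abbreviation RC :: "'a set" where
  "RC \<equiv> generate_ring QR (carrier R \<union> C_phi R QR S \<phi>)"

abbreviation St :: "'b set" where
  "St \<equiv> generate_ring QS (carrier S \<union> ext_center QS)"

lemma RC_generators_subset: "carrier R \<union> C_phi R QR S \<phi> \<subseteq> carrier QR"
  using R_in_QR ext_center_closed[OF C_phi_ext_center] by blast

lemma St_generators_subset: "carrier S \<union> ext_center QS \<subseteq> carrier QS"
  using S_in_QS ext_center_closed[of _ QS] by blast

lemma RC_subring: "subring RC QR"
  using QR.generate_ring_is_subring[OF RC_generators_subset] .

lemma St_subring: "subring St QS"
  using QS.generate_ring_is_subring[OF St_generators_subset] .

lemma subring_St_centralizer: "subring (St \<inter> ring_centralizer QS phi_centralizer) QS"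
  using QS.subring_inter[OF St_subring QS.subring_ring_centralizer] phi_centralizer_closed by blast

lemma phi_in_St_centralizer:
  assumes r: "r \<in> carrier R"
  shows "\<phi> r \<in> St \<inter> ring_centralizer QS phi_centralizer"
proof -
  have "\<phi> r \<in> St" using phi_closed[OF r] by (simp add: generate_ring.incl)
  moreover have "\<phi> r \<in> ring_centralizer QS phi_centralizer"
    using phi_centralizer_commute[OF _ r] S_in_QS[OF phi_closed[OF r]]
    unfolding ring_centralizer_def[of QS] by simp
  ultimately show ?thesis by blast
qed

lemma ext_center_in_St_centralizer:
  assumes z: "z \<in> ext_center QS"
  shows "z \<in> St \<inter> ring_centralizer QS phi_centralizer"
proof -
  have "z \<in> St" using z by (simp add: generate_ring.incl)
  moreover have "z \<in> ring_centralizer QS phi_centralizer"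
    using ext_center_commute[OF z] phi_centralizer_closed ext_center_closed[OF z]
    unfolding ring_centralizer_def[of QS] by simp
  ultimately show ?thesis by blast
qed

lemma represented_on_RC:
  assumes x: "x \<in> RC"
  shows "\<exists>y \<in> St \<inter> ring_centralizer QS phi_centralizer. \<exists>I. represents I x y"
proof -
  define W where "W = St \<inter> ring_centralizer QS phi_centralizer"
  define T where "T = {x. \<exists>y \<in> W. \<exists>I. represents I x y}"
  have W: "subring W QS" unfolding W_def by (rule subring_St_centralizer)
  have T_intro: "x \<in> T" if "represents I x y" "y \<in> W" for I x y
    using that unfolding T_def by blast
  have "subring T QR"
  proof (rule QR.subringI)
    show "T \<subseteq> carrier QR" unfolding T_def using represents_closed(1) by blast
    show "\<one>\<^bsub>QR\<^esub> \<in> T"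
      using T_intro[OF represents_phi[OF R_closed(1)]] phi_in_St_centralizer[OF R_closed(1)]
      unfolding W_def by blast
    fix x x' assume "x \<in> T" "x' \<in> T"
    then obtain y y' I I' where rep: "represents I x y" "represents I' x' y'" and y: "y \<in> W" "y' \<in> W"
      unfolding T_def by blast
    show "\<ominus>\<^bsub>QR\<^esub> x \<in> T" using T_intro[OF represents_a_inv[OF rep(1)] subringE(5)[OF W y(1)]] .
    show "x \<otimes>\<^bsub>QR\<^esub> x' \<in> T" using T_intro[OF represents_mult[OF rep] subringE(6)[OF W y]] .
    show "x \<oplus>\<^bsub>QR\<^esub> x' \<in> T" using T_intro[OF represents_add[OF rep] subringE(7)[OF W y]] .
  qed
  moreover have "carrier R \<union> C_phi R QR S \<phi> \<subseteq> T"
  proof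
    fix x assume "x \<in> carrier R \<union> C_phi R QR S \<phi>"
    then show "x \<in> T"
    proof
      assume "x \<in> carrier R"
      then show ?thesis using T_intro[OF represents_phi] phi_in_St_centralizer unfolding W_def by blast
    next
      assume "x \<in> C_phi R QR S \<phi>"
      then obtain y where "y \<in> ext_center QS" "represents (Dq R QR x) x y"
        using C_phi_represented by blast
      then show ?thesis using T_intro ext_center_in_St_centralizer unfolding W_def by blast
    qed
  qed
  ultimately have "RC \<subseteq> T"
    using QR.generate_ring_min_subring1[OF RC_generators_subset] by blast
  then show ?thesis using x unfolding T_def W_def by blast
qed

definition phi_ext :: "'a \<Rightarrow> 'b" where
  "phi_ext x = (THE y. \<exists>I. represents I x y)"

lemma phi_ext_eq:
  assumes "represents I x y"
  shows "phi_ext x = y"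
  unfolding phi_ext_def
proof (rule the_equality)
  fix y' assume "\<exists>I'. represents I' x y'"
  then obtain I' where "represents I' x y'" by blast
  then show "y' = y" using represents_unique assms by blast
qed (use assms in blast)

lemma phi_ext_represents:
  assumes "x \<in> RC"
  shows "phi_ext x \<in> St \<inter> ring_centralizer QS phi_centralizer" "\<exists>I. represents I x (phi_ext x)"
proof -
  obtain y I where "y \<in> St \<inter> ring_centralizer QS phi_centralizer" "represents I x y"
    using represented_on_RC[OF assms] by blast
  with phi_ext_eq show "phi_ext x \<in> St \<inter> ring_centralizer QS phi_centralizer"
    "\<exists>I. represents I x (phi_ext x)" by auto
qed

lemma phi_ext_phi: "r \<in> carrier R \<Longrightarrow> phi_ext r = \<phi> r"
  using phi_ext_eq[OF represents_phi] .

lemma phi_ext_ring_hom: "phi_ext \<in> ring_hom (QR\<lparr>carrier := RC\<rparr>) (QS\<lparr>carrier := St\<rparr>)"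
proof (rule ring_hom_memI)
  fix x x' assume "x \<in> carrier (QR\<lparr>carrier := RC\<rparr>)" "x' \<in> carrier (QR\<lparr>carrier := RC\<rparr>)"
  then have "x \<in> RC" "x' \<in> RC" by simp_all
  then obtain I I' where "represents I x (phi_ext x)" "represents I' x' (phi_ext x')"
    using phi_ext_represents(2)[of x] phi_ext_represents(2)[of x'] by blast
  then show "phi_ext (x \<otimes>\<^bsub>QR\<lparr>carrier := RC\<rparr>\<^esub> x') = phi_ext x \<otimes>\<^bsub>QS\<lparr>carrier := St\<rparr>\<^esub> phi_ext x'"
    and "phi_ext (x \<oplus>\<^bsub>QR\<lparr>carrier := RC\<rparr>\<^esub> x') = phi_ext x \<oplus>\<^bsub>QS\<lparr>carrier := St\<rparr>\<^esub> phi_ext x'"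
    using phi_ext_eq[OF represents_mult] phi_ext_eq[OF represents_add] by simp_all
next
  fix x assume "x \<in> carrier (QR\<lparr>carrier := RC\<rparr>)"
  then show "phi_ext x \<in> carrier (QS\<lparr>carrier := St\<rparr>)" using phi_ext_represents(1)[of x] by simp
next
  show "phi_ext \<one>\<^bsub>QR\<lparr>carrier := RC\<rparr>\<^esub> = \<one>\<^bsub>QS\<lparr>carrier := St\<rparr>\<^esub>"
    using phi_ext_phi[OF R_closed(1)] phi_one by simp
qed

lemma phi_ext_C_phi: "phi_ext ` C_phi R QR S \<phi> \<subseteq> ext_center QS"
proof
  fix y assume "y \<in> phi_ext ` C_phi R QR S \<phi>"
  then obtain q where q: "q \<in> C_phi R QR S \<phi>" "y = phi_ext q" by blast
  obtain z where "z \<in> ext_center QS" "represents (Dq R QR q) q z"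
    using C_phi_represented[OF q(1)] by blast
  then show "y \<in> ext_center QS" using q(2) phi_ext_eq by simp
qed

lemma phi_ext_unique:
  assumes hom: "\<psi> \<in> ring_hom (QR\<lparr>carrier := RC\<rparr>) (QS\<lparr>carrier := St\<rparr>)"
    and ext: "\<forall>r \<in> carrier R. \<psi> r = \<phi> r" and x: "x \<in> RC"
  shows "\<psi> x = phi_ext x"
proof -
  obtain I where rep: "represents I x (phi_ext x)" using phi_ext_represents(2)[OF x] by blast
  have RC_R: "r \<in> carrier R \<Longrightarrow> r \<in> RC" for r by (simp add: generate_ring.incl)
  have hom_mult: "\<psi> (a \<otimes>\<^bsub>QR\<^esub> b) = \<psi> a \<otimes>\<^bsub>QS\<^esub> \<psi> b" if "a \<in> RC" "b \<in> RC" for a b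
    using ring_hom_mult[OF hom, of a b] that by simp
  have "\<psi> x \<in> St" using ring_hom_closed[OF hom, of x] x by simp
  then have psi_x: "\<psi> x \<in> carrier QS" using subringE(1)[OF St_subring] by blast
  have "\<psi> x \<otimes>\<^bsub>QS\<^esub> \<phi> r \<otimes>\<^bsub>QS\<^esub> \<phi> i = \<phi> (x \<otimes>\<^bsub>QR\<^esub> r \<otimes>\<^bsub>QR\<^esub> i)"
    if i: "i \<in> I" and r: "r \<in> carrier R" for i r
  proof -
    have iR: "i \<in> carrier R" and xri: "x \<otimes>\<^bsub>QR\<^esub> r \<otimes>\<^bsub>QR\<^esub> i \<in> carrier R"
      using rep i r unfolding represents_def by auto
    have "x \<otimes>\<^bsub>QR\<^esub> r \<in> RC" using x RC_R[OF r] by (rule generate_ring.eng_mult)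
    then have "\<psi> (x \<otimes>\<^bsub>QR\<^esub> r \<otimes>\<^bsub>QR\<^esub> i) = \<psi> x \<otimes>\<^bsub>QS\<^esub> \<psi> r \<otimes>\<^bsub>QS\<^esub> \<psi> i"
      using hom_mult x RC_R[OF r] RC_R[OF iR] by simp
    then show ?thesis using ext r iR xri by simp
  qed
  with rep psi_x have "represents I x (\<psi> x)" unfolding represents_def by blast
  from phi_ext_eq[OF this] show ?thesis by simp
qed

lemma phi_ext_centralizing: "centralizing (QR\<lparr>carrier := RC\<rparr>) (QS\<lparr>carrier := St\<rparr>) phi_ext"
proof -
  let ?Z = "ring_centralizer (QS\<lparr>carrier := St\<rparr>) (phi_ext ` RC)"
  have Z: "s \<in> ?Z \<longleftrightarrow> s \<in> St \<and> (\<forall>x \<in> RC. s \<otimes>\<^bsub>QS\<^esub> phi_ext x = phi_ext x \<otimes>\<^bsub>QS\<^esub> s)" for s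
    unfolding ring_centralizer_def by simp
  have img: "phi_ext x \<in> St \<inter> ring_centralizer QS phi_centralizer" if "x \<in> RC" for x
    using phi_ext_represents(1)[OF that] .
  have G_St: "phi_ext ` RC \<union> ?Z \<subseteq> St" using img Z by blast
  then have G_QS: "phi_ext ` RC \<union> ?Z \<subseteq> carrier QS" using subringE(1)[OF St_subring] by blast
  have gens: "\<phi> ` carrier R \<union> phi_centralizer \<subseteq> phi_ext ` RC \<union> ?Z"
  proof
    fix s assume "s \<in> \<phi> ` carrier R \<union> phi_centralizer"
    then show "s \<in> phi_ext ` RC \<union> ?Z"
    proof
      assume "s \<in> \<phi> ` carrier R"
      then obtain r where r: "r \<in> carrier R" "s = \<phi> r" by blast
      then have "s = phi_ext r" using phi_ext_phi by simp
      moreover have "r \<in> RC" using r by (simp add: generate_ring.incl)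
      ultimately show ?thesis by blast
    next
      assume s: "s \<in> phi_centralizer"
      then have "s \<in> St" using generate_ring.incl[of s] unfolding ring_centralizer_def by blast
      moreover have "s \<otimes>\<^bsub>QS\<^esub> phi_ext x = phi_ext x \<otimes>\<^bsub>QS\<^esub> s" if "x \<in> RC" for x
        using s img[OF that] unfolding ring_centralizer_def[of QS] by simp
      ultimately show ?thesis using Z by blast
    qed
  qed
  have "z \<in> ?Z" if z: "z \<in> ext_center QS" for z
  proof -
    have "z \<in> St" using ext_center_in_St_centralizer[OF z] by blast
    moreover have "z \<otimes>\<^bsub>QS\<^esub> phi_ext x = phi_ext x \<otimes>\<^bsub>QS\<^esub> z" if "x \<in> RC" for x
      using ext_center_commute[OF z] img[OF that] subringE(1)[OF St_subring] by blast
    ultimately show ?thesis using Z by blast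
  qed
  then have "ext_center QS \<subseteq> generate_ring QS (phi_ext ` RC \<union> ?Z)"
    using generate_ring.incl[of _ "phi_ext ` RC \<union> ?Z" QS] by blast
  moreover have "carrier S \<subseteq> generate_ring QS (phi_ext ` RC \<union> ?Z)"
  proof -
    have "carrier S = generate_ring QS (\<phi> ` carrier R \<union> phi_centralizer)"
      by (rule S_generated)
    also have "\<dots> \<subseteq> generate_ring QS (phi_ext ` RC \<union> ?Z)"
      by (rule QS.mono_generate_ring[OF gens G_QS])
    finally show ?thesis .
  qed
  ultimately have "St \<subseteq> generate_ring QS (phi_ext ` RC \<union> ?Z)"
    by (intro QS.generate_ring_min_subring1[OF St_generators_subset
          QS.generate_ring_is_subring[OF G_QS]]) blast
  then show ?thesis
    unfolding centralizing_def using QS.subring_eq_generate_ring[OF St_subring G_St] by simp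
qed

end

theorem lemma1p1:
  fixes R QR :: "'a ring" and S QS :: "'b ring" and \<phi> :: "'a \<Rightarrow> 'b"
  assumes "ring R" and "ring S"
    and "sym_quot R QR" and "sym_quot S QS"
    and "\<phi> \<in> ring_hom R S" and "centralizing R S \<phi>"
  defines "Rt \<equiv> generate_ring QR (carrier R \<union> ext_center QR)"
    and "St \<equiv> generate_ring QS (carrier S \<union> ext_center QS)"
    and "RC \<equiv> generate_ring QR (carrier R \<union> C_phi R QR S \<phi>)"
  shows "subring RC QR \<and> RC \<subseteq> Rt \<and> carrier R \<subseteq> RC \<and>
    (\<exists>\<psi>. \<psi> \<in> ring_hom (QR\<lparr>carrier := RC\<rparr>) (QS\<lparr>carrier := St\<rparr>) \<and>
         (\<forall>r \<in> carrier R. \<psi> r = \<phi> r) \<and>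
         centralizing (QR\<lparr>carrier := RC\<rparr>) (QS\<lparr>carrier := St\<rparr>) \<psi> \<and>
         \<psi> ` C_phi R QR S \<phi> \<subseteq> ext_center QS \<and>
         (\<forall>\<psi>'. \<psi>' \<in> ring_hom (QR\<lparr>carrier := RC\<rparr>) (QS\<lparr>carrier := St\<rparr>) \<and>
                (\<forall>r \<in> carrier R. \<psi>' r = \<phi> r) \<longrightarrow> (\<forall>x \<in> RC. \<psi>' x = \<psi> x)))"
proof -
  interpret centralizing_sym_quot R QR S QS \<phi>
    using assms(3-6) by unfold_locales
  have "RC \<subseteq> Rt"
    unfolding RC_def Rt_def
    using RC_generators_subset C_phi_ext_center R_in_QR ext_center_closed[of _ QR]
    by (intro QR.mono_generate_ring) blast+
  moreover have "carrier R \<subseteq> RC"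
    unfolding RC_def by (blast intro: generate_ring.incl)
  ultimately show ?thesis
    unfolding RC_def St_def
    using RC_subring phi_ext_ring_hom phi_ext_phi phi_ext_centralizing phi_ext_C_phi phi_ext_unique
    by blast
qed

end
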